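(* Let $h,n,m\in\mathbb{N}$, and let $q_1,\ldots,q_h$ be distinct primes with $q_j\nmid mn$ for all $j$. For each $j$ and each $i\in\{1,\dots,h\}$ let $s_{i,j}\subseteq\{1,\ldots,q_j-1\}$, with $s_{i_1,j}\cap s_{i_2,j}=\emptyset$ for all $i_1\ne i_2$ (the sets $s_{i,j}$ may be empty). Let $S_{i,j}=\sum_{a\in s_{i,j}}e\big(\frac{na}{mq_j}\big)$. Suppose that $s_{i,i}\ne\emptyset$ for every $i$. Then $\det\big([S_{i,j}]_{1\le i,j\le h}\big)\ne0$.
   Context: $e(x):=e^{2\pi i x}$. *)

theory Defs
  imports Complex_Main "Jordan_Normal_Form.Determinant"
begin

definition e :: "real \<Rightarrow> complex" where
  "e x = exp (2 * of_real pi * \<i> * of_real x)"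

end

theory Submission
  imports Defs "Jordan_Normal_Form.Char_Poly" "HOL-Number_Theory.Cong"
begin

(* Induction on h, expanding the determinant along the last column k. The entries of the other
   columns, hence all cofactors of the last column, lie in the ring Z[zeta_M] generated by
   zeta_M = e(1/M), where M = m q_0 ... q_(k-1). By Bezout, each summand e(na/(m q_k)) of the last
   column is a nonzero element of Z[zeta_m] times zeta_q^b(a), with q = q_k and a -> b(a) a
   permutation of {1..q-1}; by disjointness of the s_(i,k) all these exponents are distinct.
   Since q does not divide M, the powers zeta_q, ..., zeta_q^(q-1) are linearly independent
   over Z[zeta_M]: Dedekind's argument (Frobenius modulo primes p not dividing Mq) shows that an
   integer polynomial vanishing at zeta_Mq also vanishes at zeta_Mq^t for t coprime to Mq, and
   choosing t = 1 mod M, t = c mod q turns a vanishing combination into vanishing twisted sums,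
   which by orthogonality force every coefficient to vanish. So det = 0 would make the
   diagonal cofactor, the determinant of size k, vanish. *)

section \<open>Roots of unity\<close>

lemma e_conv_cis: "e x = cis (2 * pi * x)"
  unfolding e_def cis_conv_exp by (simp add: mult.commute mult.left_commute)

lemma e_add: "e (x + y) = e x * e y"
  unfolding e_conv_cis by (simp add: cis_mult distrib_left)

lemma e_of_int [simp]: "e (of_int k) = 1"
  unfolding e_conv_cis by (rule cis_multiple_2pi) simp

lemma e_of_nat [simp]: "e (of_nat k) = 1"
  using e_of_int[of "int k"] by simp

lemma e_0 [simp]: "e 0 = 1"
  using e_of_nat[of 0] by simp

lemma e_nonzero [simp]: "e x \<noteq> 0"
  unfolding e_def by simp

lemma e_power: "e x ^ k = e (of_nat k * x)"
  unfolding e_conv_cis DeMoivre by (simp add: mult.commute mult.left_commute)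

lemma e_eq_1_imp_Ints:
  assumes "e x = 1"
  shows "x \<in> \<int>"
proof -
  have "cos (2 * pi * x) = 1"
    using assms unfolding e_conv_cis by (metis cis.sel(1) one_complex.sel(1))
  then obtain k :: int where "2 * pi * x = of_int k * 2 * pi"
    using cos_one_2pi_int by blast
  then show ?thesis by simp
qed

lemma e_int_divide_mod:
  assumes "M \<noteq> 0"
  shows "e (of_int k / of_nat M) = e (of_int (k mod int M) / of_nat M)"
proof -
  have "real_of_int k = of_int (k mod int M) + of_nat M * of_int (k div int M)"
    by (metis mod_mult_div_eq of_int_add of_int_mult of_int_of_nat_eq)
  then have "of_int k / real M = of_int (k mod int M) / of_nat M + of_int (k div int M)"
    using assms by (simp add: add_divide_distrib)
  then show ?thesis
    by (simp add: e_add)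
qed

lemma e_nat_divide_mod:
  assumes "M \<noteq> 0"
  shows "e (of_nat k / of_nat M) = e (of_nat (k mod M) / of_nat M)"
  using e_int_divide_mod[OF assms, of "int k"] by (metis of_int_of_nat_eq zmod_int)

lemma e_mult_mod:
  assumes "q \<noteq> 0" "int c = x mod int q"
  shows "e (of_int (x * int a) / of_nat q) = e (of_nat (c * a mod q) / of_nat q)"
proof -
  have "int (c * a mod q) = (int c * int a) mod int q"
    by (simp add: zmod_int)
  also have "\<dots> = (x * int a) mod int q"
    unfolding assms(2) by (rule mod_mult_left_eq)
  finally have "(x * int a) mod int q = int (c * a mod q)" ..
  then show ?thesis
    by (subst e_int_divide_mod[OF assms(1)]) (simp only: of_int_of_nat_eq)
qed

lemma e_divide_mult_split:
  fixes k \<alpha> \<beta> :: int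
  assumes "\<alpha> * int m + \<beta> * int q = 1" "m \<noteq> 0" "q \<noteq> 0"
  shows "e (of_int k / of_nat (m * q)) = e (of_int (k * \<alpha>) / of_nat q) * e (of_int (k * \<beta>) / of_nat m)"
proof -
  have "of_int \<alpha> * real m + of_int \<beta> * real q = 1"
    using assms(1) by (metis of_int_1 of_int_add of_int_mult of_int_of_nat_eq)
  then have "of_int k / real (m * q) = of_int k * (of_int \<alpha> * real m + of_int \<beta> * real q) / real (m * q)"
    by simp
  also have "\<dots> = (of_int (k * \<alpha>) * real m + of_int (k * \<beta>) * real q) / real (m * q)"
    by (simp add: algebra_simps)
  also have "\<dots> = of_int (k * \<alpha>) / real q + of_int (k * \<beta>) / real m"
    using assms(2,3) by (simp add: add_divide_distrib)
  finally show ?thesis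
    by (simp add: e_add)
qed

lemma sum_e_multiples:
  assumes "q \<noteq> 0"
  shows "(\<Sum>c<q. e (of_nat (c * d) / of_nat q)) = (if q dvd d then of_nat q else 0)"
proof (cases "q dvd d")
  case True
  then obtain j where "d = q * j" ..
  with assms have "e (of_nat (c * d) / of_nat q) = 1" for c
    using e_of_nat[of "c * j"] by simp
  with True show ?thesis by simp
next
  case False
  define w where "w = e (of_nat d / of_nat q)"
  have "w \<noteq> 1"
  proof
    assume "w = 1"
    then obtain k where "of_nat d / of_nat q = (of_int k :: real)"
      unfolding w_def by (auto dest: e_eq_1_imp_Ints elim: Ints_cases)
    with assms have "real_of_int (int d) = of_int (int q * k)"
      by (simp add: field_simps)
    then have "int d = int q * k"
      by (simp only: of_int_eq_iff)
    with False show False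
      by (metis dvd_triv_left int_dvd_int_iff)
  qed
  have "w ^ q = 1"
    unfolding w_def e_power using assms by simp
  have "(\<Sum>c<q. e (of_nat (c * d) / of_nat q)) = (\<Sum>c<q. w ^ c)"
    unfolding w_def e_power by (simp add: field_simps)
  also have "\<dots> = 0"
    using \<open>w \<noteq> 1\<close> \<open>w ^ q = 1\<close> by (simp add: geometric_sum)
  finally show ?thesis
    using False by simp
qed

lemma sum_e_difference:
  assumes "b \<in> {1..q-1}" "b' \<in> {1..q-1}"
  shows "(\<Sum>c<q. e (of_nat (c * (b + (q - b'))) / of_nat q)) = (if b = b' then of_nat q else 0)"
proof -
  have "q dvd b + (q - b') \<longleftrightarrow> b = b'"
  proof
    assume dvd: "q dvd b + (q - b')"
    then have "q \<le> b + (q - b')"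
      using assms by (intro dvd_imp_le) auto
    moreover have "q dvd b + (q - b') - q"
      using dvd by (simp add: dvd_diff_nat)
    moreover have "b + (q - b') - q < q"
      using assms by auto
    ultimately have "b + (q - b') = q"
      using nat_dvd_not_less by fastforce
    then show "b = b'"
      using assms by auto
  qed (use assms in auto)
  then show ?thesis
    using assms sum_e_multiples[of q "b + (q - b')"] by auto
qed

lemma sum_e_inversion:
  assumes b': "b' \<in> {1..q-1}"
  shows "(\<Sum>c<q. e (of_nat (c * (q - b')) / of_nat q)
      * (\<Sum>b\<in>{1..q-1}. y b * e (of_nat (c * b) / of_nat q))) = of_nat q * y b'"
proof -
  have "e (of_nat (c * (b + (q - b'))) / of_nat q)
      = e (of_nat (c * (q - b')) / of_nat q) * e (of_nat (c * b) / of_nat q)" for c b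
    by (simp add: add_divide_distrib algebra_simps flip: e_add)
  then have "(\<Sum>c<q. e (of_nat (c * (q - b')) / of_nat q)
        * (\<Sum>b\<in>{1..q-1}. y b * e (of_nat (c * b) / of_nat q)))
      = (\<Sum>c<q. \<Sum>b\<in>{1..q-1}. y b * e (of_nat (c * (b + (q - b'))) / of_nat q))"
    by (simp add: sum_distrib_left mult.left_commute)
  also have "\<dots> = (\<Sum>b\<in>{1..q-1}. y b * (\<Sum>c<q. e (of_nat (c * (b + (q - b'))) / of_nat q)))"
    by (subst sum.swap) (simp only: sum_distrib_left)
  also have "\<dots> = (\<Sum>b\<in>{1..q-1}. if b = b' then of_nat q * y b else 0)"
    by (rule sum.cong[OF refl]) (simp only: sum_e_difference b', simp)
  also have "\<dots> = of_nat q * y b'"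
    using b' by simp
  finally show ?thesis .
qed

lemma all_twisted_sums_zero_imp_zero:
  assumes q: "q > 1"
    and sums: "\<And>c. c \<in> {1..q-1} \<Longrightarrow> (\<Sum>b\<in>{1..q-1}. y b * e (of_nat (c * b) / of_nat q)) = 0"
    and b: "b \<in> {1..q-1}"
  shows "y b = 0"
proof -
  define S where "S = (\<Sum>b\<in>{1..q-1}. y b)"
  have twisted: "(\<Sum>b\<in>{1..q-1}. y b * e (of_nat (c * b) / of_nat q)) = (if c = 0 then S else 0)"
    if "c < q" for c
    using sums[of c] that unfolding S_def by (cases "c = 0") auto
  have weighted: "of_nat q * y b' = S" if b': "b' \<in> {1..q-1}" for b'
  proof -
    have "of_nat q * y b' = (\<Sum>c<q. e (of_nat (c * (q - b')) / of_nat q)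
        * (\<Sum>b\<in>{1..q-1}. y b * e (of_nat (c * b) / of_nat q)))"
      using b' by (rule sum_e_inversion[symmetric])
    also have "\<dots> = (\<Sum>c<q. e (of_nat (c * (q - b')) / of_nat q) * (if c = 0 then S else 0))"
      by (rule sum.cong[OF refl]) (simp only: twisted lessThan_iff)
    also have "\<dots> = (\<Sum>c<q. if c = 0 then S else 0)"
      by (intro sum.cong) auto
    also have "\<dots> = S"
      using q by simp
    finally show ?thesis .
  qed
  then have "S = (\<Sum>b\<in>{1..q-1}. S / of_nat q)"
    using q unfolding S_def by (intro sum.cong) (auto simp: field_simps)
  then have "S = of_nat (q - 1) * S / of_nat q"
    by simp
  then have "S = 0"
    using q by (auto simp: field_simps of_nat_diff)
  with weighted[OF b] q show ?thesis
    by simp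
qed

section \<open>Integer polynomials\<close>

abbreviation ipoly :: "int poly \<Rightarrow> 'a :: comm_ring_1 \<Rightarrow> 'a" where
  "ipoly f x \<equiv> poly (of_int_poly f) x"

lemma ipoly_add [simp]: "ipoly (f + g) x = ipoly f x + ipoly g x"
  by (simp add: of_int_poly_hom.hom_add)

lemma ipoly_diff [simp]: "ipoly (f - g) x = ipoly f x - ipoly g x"
  by (simp add: of_int_poly_hom.hom_minus)

lemma ipoly_mult [simp]: "ipoly (f * g) x = ipoly f x * ipoly g x"
  by (simp add: of_int_poly_hom.hom_mult)

lemma ipoly_smult [simp]: "ipoly (smult c f) x = of_int c * ipoly f x"
  by (simp add: map_poly_smult)

lemma ipoly_monom [simp]: "ipoly (monom c k) x = of_int c * x ^ k"
  by (simp add: poly_monom map_poly_monom)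

lemma ipoly_const [simp]: "ipoly [:c:] x = of_int c"
  using ipoly_monom[of c 0 x] by (simp add: monom_0)

lemma ipoly_pcompose [simp]: "ipoly (f \<circ>\<^sub>p g) x = ipoly f (ipoly g x)"
  by (simp add: poly_pcompose of_int_hom.map_poly_pcompose)

lemma ipoly_sum [simp]: "ipoly (sum f S) x = (\<Sum>y\<in>S. ipoly (f y) x)"
  by (induct S rule: infinite_finite_induct) auto

lemma diff_dvd_power_diff: "x - y dvd x ^ n - (y :: 'a :: comm_ring_1) ^ n"
  unfolding power_diff_sumr2 by simp

lemma prime_dvd_add_power_diff:
  fixes a b :: "'a :: comm_ring_1"
  assumes "prime p"
  shows "of_nat p dvd (a + b) ^ p - a ^ p - b ^ p"
proof -
  have p: "p \<ge> 2"
    using assms by (simp add: prime_ge_2_nat)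
  have "{..p} = insert 0 (insert p {1..p-1})"
    using p by auto
  then have "(a + b) ^ p - a ^ p - b ^ p = (\<Sum>k\<in>{1..p-1}. of_nat (p choose k) * a ^ k * b ^ (p - k))"
    using p by (simp add: binomial_ring algebra_simps)
  also have "of_nat p dvd \<dots>"
  proof (rule dvd_sum)
    fix k assume "k \<in> {1..p-1}"
    then have "p dvd p choose k"
      using assms by (intro dvd_choose_prime) auto
    then obtain r where "p choose k = p * r" ..
    then show "of_nat p dvd of_nat (p choose k) * a ^ k * b ^ (p - k)"
      by (simp add: mult.assoc)
  qed
  finally show ?thesis .
qed

lemma prime_dvd_power_self_diff:
  fixes c :: int
  assumes "prime p"
  shows "int p dvd c ^ p - c"
proof -
  have split: "(i + 1) ^ p - (i + 1) = (i ^ p - i) + ((i + 1) ^ p - i ^ p - 1 ^ p)" for i :: int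
    by simp
  have binomial: "int p dvd (i + 1) ^ p - i ^ p - 1 ^ p" for i :: int
    using prime_dvd_add_power_diff[OF assms, of i 1] by simp
  show ?thesis
  proof (induction c rule: int_induct[where k = 0])
    case base
    show ?case
      using prime_gt_0_nat[OF assms] by (simp add: power_0_left)
  next
    case (step1 i)
    then show ?case
      using split[of i] binomial[of i] by (metis dvd_add)
  next
    case (step2 i)
    then show ?case
      using split[of "i - 1"] binomial[of "i - 1"] by (metis diff_add_cancel dvd_add_left_iff)
  qed
qed

lemma int_poly_frobenius:
  assumes "prime p"
  shows "[:int p:] dvd g ^ p - g \<circ>\<^sub>p monom 1 p"
proof (induction g)
  case 0
  show ?case
    using prime_gt_0_nat[OF assms] by (simp add: power_0_left)
next
  case (pCons c g)
  define a where "a = [:c:]"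
  define b where "b = monom 1 1 * g"
  have "pCons c g = a + b"
    unfolding a_def b_def by (simp add: monom_altdef)
  moreover have "pCons c g \<circ>\<^sub>p monom 1 p = a + monom 1 p * (g \<circ>\<^sub>p monom 1 p)"
    unfolding a_def by (simp add: pcompose_pCons)
  moreover have "a ^ p = [:c ^ p:]" "b ^ p = monom 1 p * g ^ p"
    unfolding a_def b_def by (simp_all add: poly_const_pow power_mult_distrib monom_power)
  ultimately have "pCons c g ^ p - pCons c g \<circ>\<^sub>p monom 1 p
      = ((a + b) ^ p - a ^ p - b ^ p) + [:c ^ p - c:] + monom 1 p * (g ^ p - g \<circ>\<^sub>p monom 1 p)"
    unfolding a_def by (simp add: algebra_simps)
  moreover have "[:int p:] dvd (a + b) ^ p - a ^ p - b ^ p"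
    using prime_dvd_add_power_diff[OF assms, of a b] by (simp add: of_nat_poly)
  moreover have "[:int p:] dvd [:c ^ p - c:]"
    using prime_dvd_power_self_diff[OF assms] by simp
  ultimately show ?case
    using pCons.IH by (simp add: dvd_add)
qed

lemma monic_nonconstant_not_unit_mod:
  fixes f H :: "int poly"
  assumes f: "monic f" "degree f \<noteq> 0" and p: "p > 1"
  shows "\<not> [:p:] dvd f * H - 1"
proof
  assume "[:p:] dvd f * H - 1"
  define R where "R = map_poly (\<lambda>c. c mod p) H"
  have "[:p:] dvd H - R"
    unfolding R_def const_poly_dvd_iff by (simp add: coeff_map_poly)
  then have "[:p:] dvd (f * H - 1) - f * (H - R)"
    using \<open>[:p:] dvd f * H - 1\<close> by (simp add: dvd_diff)
  then have reduced: "p dvd coeff (f * R - 1) n" for n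
    unfolding const_poly_dvd_iff by (simp add: algebra_simps)
  have "R \<noteq> 0"
  proof
    assume "R = 0"
    then have "p dvd 1"
      using reduced[of 0] by simp
    with p show False
      by simp
  qed
  let ?d = "degree f + degree R"
  have "coeff (f * R - 1) ?d = lead_coeff R"
    using f by (simp add: coeff_mult_degree_sum)
  then have "p dvd lead_coeff R"
    using reduced[of ?d] by simp
  moreover have "lead_coeff R = coeff H (degree R) mod p"
    unfolding R_def by (simp add: coeff_map_poly)
  moreover have "lead_coeff R \<noteq> 0"
    using \<open>R \<noteq> 0\<close> by simp
  ultimately have "p dvd lead_coeff R" "0 < lead_coeff R" "lead_coeff R < p"
    using p pos_mod_sign[of p "coeff H (degree R)"] pos_mod_bound[of p "coeff H (degree R)"]
    by (auto simp: le_less)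
  then show False
    using zdvd_not_zless by blast
qed

lemma monic_monom_minus_one:
  assumes "n > 0"
  shows "monic (monom 1 n - (1 :: 'a :: comm_ring_1 poly))"
proof -
  have "degree (monom 1 n + (- 1 :: 'a poly)) = n"
    using assms by (subst degree_add_eq_left) (simp_all add: degree_monom_eq)
  then show ?thesis
    using assms by simp
qed

lemma x_power_minus_one_factors_coprime_mod:
  fixes f g :: "int poly" and p :: int
  assumes "monom 1 N - 1 = f * g" "coprime (int N) p"
  obtains A B where "[:p:] dvd f * A + g * B - 1"
proof -
  obtain u v where uv: "u * int N + v * p = 1"
    using bezout_int[of "int N" p] assms(2) by auto
  \<comment> \<open>\<open>x\<^sup>N - 1\<close> is separable modulo \<open>p\<close>: \<open>x P' - N P = N\<close>.\<close>
  define x :: "int poly" where "x = [:0, 1:]"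
  have "x * monom (int N) (N - 1) = monom (int N) N"
    unfolding x_def by (cases N) (simp_all add: monom_Suc)
  then have deriv: "x * pderiv (f * g) - [:int N:] * (f * g) = [:int N:]"
    unfolding assms(1)[symmetric] by (simp add: pderiv_monom pderiv_diff smult_diff_right smult_monom)
  have ring: "a * (c * (x * b - n * d)) + d * (c * (x * e)) = c * (x * (a * b + d * e) - n * (a * d))"
    for a b c d e n :: "int poly"
    by (simp add: algebra_simps)
  have "f * ([:u:] * (x * pderiv g - [:int N:] * g)) + g * ([:u:] * (x * pderiv f))
      = [:u:] * (x * pderiv (f * g) - [:int N:] * (f * g))"
    unfolding pderiv_mult by (rule ring)
  also have "\<dots> = [:u * int N:]"
    unfolding deriv by simp
  finally have combination: "f * ([:u:] * (x * pderiv g - [:int N:] * g)) + g * ([:u:] * (x * pderiv f))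
      = [:u * int N:]" .
  have "[:u * int N:] - 1 = [:p:] * [:- v:]"
    by (rule poly_eqI) (use uv in \<open>simp add: coeff_pCons algebra_simps split: nat.split\<close>)
  then have "[:p:] dvd f * ([:u:] * (x * pderiv g - [:int N:] * g)) + g * ([:u:] * (x * pderiv f)) - 1"
    unfolding combination by simp
  then show ?thesis
    by (rule that)
qed

section \<open>Dedekind's lemma for roots of unity\<close>

lemma primitive_int_poly_dvd_smult_imp_dvd:
  fixes f G :: "int poly"
  assumes "content f = 1" "a \<noteq> 0" "f dvd smult a G"
  shows "f dvd G"
proof -
  have "f dvd primitive_part (smult a G)"
    using primitive_part_dvd_primitive_partI[OF assms(3)] assms(1) by (simp add: primitive_part_prim)
  also have "\<dots> = [:unit_factor a:] * primitive_part G"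
    by (simp add: primitive_part_smult)
  finally have "f dvd smult (unit_factor a) (primitive_part G)"
    by simp
  then have "f dvd smult (unit_factor a) (smult (unit_factor a) (primitive_part G))"
    by (rule dvd_smult)
  then have "f dvd primitive_part G"
    using assms(2) by (simp only: smult_smult) simp
  also have "primitive_part G dvd G"
    by (metis content_times_primitive_part dvd_smult dvd_refl)
  finally show ?thesis .
qed

lemma int_poly_vanishing_primitive_generator:
  fixes z :: "'a :: field_char_0"
  assumes "R \<noteq> 0" "ipoly R z = 0"
  obtains f where "content f = 1" "ipoly f z = 0" "\<And>G. ipoly G z = 0 \<Longrightarrow> f dvd G"
proof -
  define d where "d = (LEAST d. \<exists>R. R \<noteq> 0 \<and> degree R = d \<and> ipoly R z = 0)"
  obtain R0 where R0: "R0 \<noteq> 0" "degree R0 = d" "ipoly R0 z = 0"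
    using LeastI_ex[of "\<lambda>d. \<exists>R. R \<noteq> 0 \<and> degree R = d \<and> ipoly R z = 0"] assms
    unfolding d_def by blast
  have least: "d \<le> degree R'" if "R' \<noteq> 0" "ipoly R' z = 0" for R'
    unfolding d_def by (rule Least_le) (use that in blast)
  define f where "f = primitive_part R0"
  have "f \<noteq> 0" "degree f = d" "content f = 1"
    using R0 by (simp_all add: f_def)
  have "R0 = smult (content R0) f"
    by (simp add: f_def)
  then have "ipoly f z = 0"
    using R0 by (metis ipoly_smult content_eq_zero_iff mult_eq_0_iff of_int_eq_0_iff)
  have "f dvd G" if G: "ipoly G z = 0" for G
  proof -
    define r where "r = pseudo_mod G f"
    obtain a q where "a \<noteq> 0" "smult a G = f * q + r"
      using pseudo_mod(1)[OF \<open>f \<noteq> 0\<close>] unfolding r_def by blast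
    moreover have "r = 0"
    proof (rule ccontr)
      assume "r \<noteq> 0"
      moreover have "ipoly r z = 0"
        using \<open>smult a G = f * q + r\<close> G \<open>ipoly f z = 0\<close>
        by (metis add_0 ipoly_add ipoly_mult ipoly_smult mult_zero_left mult_zero_right)
      ultimately have "d \<le> degree r"
        by (rule least)
      with \<open>r \<noteq> 0\<close> show False
        using pseudo_mod(2)[OF \<open>f \<noteq> 0\<close>, of G] \<open>degree f = d\<close> unfolding r_def by simp
    qed
    ultimately have "f dvd smult a G"
      by simp
    with \<open>content f = 1\<close> \<open>a \<noteq> 0\<close> show "f dvd G"
      by (rule primitive_int_poly_dvd_smult_imp_dvd)
  qed
  with \<open>content f = 1\<close> \<open>ipoly f z = 0\<close> that show ?thesis
    by blast
qed

lemma int_poly_minimal_polynomial: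
  fixes z :: "'a :: field_char_0"
  assumes "monic P" "ipoly P z = 0"
  obtains f where "monic f" "degree f \<noteq> 0" "ipoly f z = 0" "\<And>G. ipoly G z = 0 \<Longrightarrow> f dvd G"
proof -
  have "P \<noteq> 0"
    using assms(1) by auto
  then obtain f0 where f0: "content f0 = 1" "ipoly f0 z = 0" "\<And>G. ipoly G z = 0 \<Longrightarrow> f0 dvd G"
    using int_poly_vanishing_primitive_generator assms(2) by blast
  obtain g where "P = f0 * g"
    using f0(3)[OF assms(2)] ..
  then have "lead_coeff f0 * lead_coeff g = 1"
    using assms(1) by (simp add: lead_coeff_mult)
  then have unit: "lead_coeff f0 * lead_coeff f0 = 1"
    by (auto simp: zmult_eq_1_iff)
  define f where "f = smult (lead_coeff f0) f0"
  have "f0 \<noteq> 0"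
    using f0(1) by auto
  with unit have "monic f"
    by (simp add: f_def)
  moreover have "ipoly f z = 0"
    using f0(2) by (simp add: f_def)
  moreover have "degree f \<noteq> 0"
  proof
    assume "degree f = 0"
    then have "f = [:1:]"
      using \<open>monic f\<close> degree_0_id[of f] by simp
    with \<open>ipoly f z = 0\<close> show False
      by simp
  qed
  moreover have "f dvd G" if "ipoly G z = 0" for G
  proof -
    have "f0 = smult (lead_coeff f0) f"
      using unit by (simp add: f_def)
    then have "f dvd f0"
      by (metis dvd_smult dvd_refl)
    from this f0(3)[OF that] show ?thesis
      by (rule dvd_trans)
  qed
  ultimately show ?thesis
    using that by blast
qed

lemma monic_factor_not_dvd_frobenius_cofactor:
  fixes f g :: "int poly"
  assumes f: "monic f" "degree f \<noteq> 0" and fg: "monom 1 N - 1 = f * g"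
    and p: "prime p" "\<not> p dvd N"
  shows "\<not> f dvd g \<circ>\<^sub>p monom 1 p"
proof
  assume "f dvd g \<circ>\<^sub>p monom 1 p"
  then obtain k where k: "g \<circ>\<^sub>p monom 1 p = f * k" ..
  have "coprime (int N) (int p)"
    using p prime_imp_coprime[of p N] by (simp add: ac_simps)
  with fg obtain A B where AB: "[:int p:] dvd f * A + g * B - 1"
    by (rule x_power_minus_one_factors_coprime_mod)
  \<comment> \<open>Modulo \<open>p\<close>, \<open>(g B)\<^sup>p\<close> is both \<open>(1 - f A)\<^sup>p\<close> and \<open>g(x\<^sup>p) B\<^sup>p = f k B\<^sup>p\<close>, making \<open>f\<close> a unit.\<close>
  have "g * B - (1 - f * A) dvd (g * B) ^ p - (1 - f * A) ^ p"
    by (rule diff_dvd_power_diff)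
  with AB have d1: "[:int p:] dvd (g * B) ^ p - (1 - f * A) ^ p"
    by (simp add: algebra_simps dvd_trans)
  have "[:int p:] dvd (g ^ p - g \<circ>\<^sub>p monom 1 p) * B ^ p"
    using int_poly_frobenius[OF p(1)] by simp
  then have d2: "[:int p:] dvd (g * B) ^ p - f * (k * B ^ p)"
    by (simp add: k power_mult_distrib algebra_simps)
  have "f * A dvd (1 - f * A) ^ p - 1"
    using diff_dvd_power_diff[of "1 - f * A" 1 p] by simp
  then obtain E where "(1 - f * A) ^ p - 1 = f * A * E" ..
  then have E: "(1 - f * A) ^ p = 1 + f * (A * E)"
    by (simp add: algebra_simps)
  have "[:int p:] dvd ((g * B) ^ p - (1 - f * A) ^ p) - ((g * B) ^ p - f * (k * B ^ p))"
    using d1 d2 by (rule dvd_diff)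
  also have "\<dots> = f * (k * B ^ p - A * E) - 1"
    unfolding E by (simp add: algebra_simps)
  finally have "[:int p:] dvd f * (k * B ^ p - A * E) - 1" .
  moreover have "int p > 1"
    using p(1) prime_gt_1_nat by auto
  ultimately show False
    using monic_nonconstant_not_unit_mod[OF f] by blast
qed

lemma int_poly_root_of_unity_power_prime:
  fixes z :: "'a :: field_char_0"
  assumes z: "z ^ N = 1" and N: "N > 0" and p: "prime p" "\<not> p dvd N" and G: "ipoly G z = 0"
  shows "ipoly G (z ^ p) = 0"
proof -
  let ?P = "monom 1 N - 1 :: int poly"
  have "monic ?P"
    using N by (rule monic_monom_minus_one)
  moreover have "ipoly ?P z = 0"
    using z by (simp add: poly_monom)
  ultimately obtain f where f: "monic f" "degree f \<noteq> 0" "ipoly f z = 0"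
    and f_dvd: "\<And>G. ipoly G z = 0 \<Longrightarrow> f dvd G"
    using int_poly_minimal_polynomial by blast
  obtain g where fg: "?P = f * g"
    using f_dvd[OF \<open>ipoly ?P z = 0\<close>] ..
  have "ipoly f (z ^ p) = 0"
  proof (rule ccontr)
    assume "ipoly f (z ^ p) \<noteq> 0"
    moreover have "ipoly ?P (z ^ p) = 0"
      using z by (simp add: poly_monom flip: power_mult) (metis mult.commute power_mult power_one)
    ultimately have "ipoly (g \<circ>\<^sub>p monom 1 p) z = 0"
      unfolding fg by (simp add: poly_monom)
    then show False
      using f_dvd monic_factor_not_dvd_frobenius_cofactor[OF f(1,2) fg p] by blast
  qed
  then show ?thesis
    using f_dvd[OF G] by (auto elim: dvdE)
qed

lemma int_poly_root_of_unity_power_coprime: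
  fixes z :: "'a :: field_char_0"
  assumes z: "z ^ N = 1" and N: "N > 0" and G: "ipoly G z = 0"
  shows "coprime t N \<Longrightarrow> ipoly G (z ^ t) = 0"
proof (induction t rule: prime_divisors_induct)
  case zero
  then have "z = 1"
    using z by simp
  with G show ?case
    by simp
next
  case (unit t)
  with G show ?case
    by simp
next
  case (factor p t)
  then have "coprime t N" "\<not> p dvd N"
    using prime_imp_coprime by auto
  have "(z ^ t) ^ N = 1"
    using z by (simp flip: power_mult add: mult.commute power_mult)
  then have "ipoly G ((z ^ t) ^ p) = 0"
    using N factor.hyps \<open>\<not> p dvd N\<close> factor.IH[OF \<open>coprime t N\<close>]
    by (rule int_poly_root_of_unity_power_prime)
  then show ?case
    by (metis mult.commute power_mult)
qed

section \<open>Cyclotomic integers\<close>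

(* For M = 0 this is just Z, since e (1 / 0) = e 0 = 1. *)
definition cyclotomic_integers :: "nat \<Rightarrow> complex set" where
  "cyclotomic_integers M = range (\<lambda>H. ipoly H (e (1 / real M)))"

lemma ipoly_in_cyclotomic_integers: "ipoly H (e (1 / real M)) \<in> cyclotomic_integers M"
  unfolding cyclotomic_integers_def by blast

lemma cyclotomic_integersE:
  assumes "x \<in> cyclotomic_integers M"
  obtains H where "x = ipoly H (e (1 / real M))"
  using assms unfolding cyclotomic_integers_def by blast

lemma cyclotomic_integers_add:
  assumes "x \<in> cyclotomic_integers M" "y \<in> cyclotomic_integers M"
  shows "x + y \<in> cyclotomic_integers M"
proof -
  obtain F G where "x = ipoly F (e (1 / real M))" "y = ipoly G (e (1 / real M))"
    using assms by (elim cyclotomic_integersE)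
  then have "x + y = ipoly (F + G) (e (1 / real M))"
    by simp
  then show ?thesis
    by (simp only: ipoly_in_cyclotomic_integers)
qed

lemma cyclotomic_integers_mult:
  assumes "x \<in> cyclotomic_integers M" "y \<in> cyclotomic_integers M"
  shows "x * y \<in> cyclotomic_integers M"
proof -
  obtain F G where "x = ipoly F (e (1 / real M))" "y = ipoly G (e (1 / real M))"
    using assms by (elim cyclotomic_integersE)
  then have "x * y = ipoly (F * G) (e (1 / real M))"
    by simp
  then show ?thesis
    by (simp only: ipoly_in_cyclotomic_integers)
qed

lemma of_int_in_cyclotomic_integers: "of_int k \<in> cyclotomic_integers M"
  using ipoly_in_cyclotomic_integers[of "[:k:]" M] by simp

lemma cyclotomic_integers_sum:
  "(\<And>x. x \<in> S \<Longrightarrow> f x \<in> cyclotomic_integers M) \<Longrightarrow> sum f S \<in> cyclotomic_integers M"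
  by (induction S rule: infinite_finite_induct)
    (auto intro: cyclotomic_integers_add of_int_in_cyclotomic_integers[of 0, simplified])

lemma cyclotomic_integers_prod:
  "(\<And>x. x \<in> S \<Longrightarrow> f x \<in> cyclotomic_integers M) \<Longrightarrow> prod f S \<in> cyclotomic_integers M"
  by (induction S rule: infinite_finite_induct)
    (auto intro: cyclotomic_integers_mult of_int_in_cyclotomic_integers[of 1, simplified])

lemma e_in_cyclotomic_integers: "e (of_int k / of_nat M) \<in> cyclotomic_integers M"
proof (cases "M = 0")
  case True
  then show ?thesis
    using of_int_in_cyclotomic_integers[of 1 M] by simp
next
  case False
  define r where "r = nat (k mod int M)"
  have "e (of_int k / of_nat M) = e (of_nat r / of_nat M)"
    using False e_int_divide_mod[of M k] by (simp add: r_def)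
  also have "\<dots> = ipoly (monom 1 r) (e (1 / real M))"
    by (simp add: e_power poly_monom)
  finally show ?thesis
    by (simp only: ipoly_in_cyclotomic_integers)
qed

lemma cyclotomic_integers_mono:
  assumes "d dvd M" "M \<noteq> 0"
  shows "cyclotomic_integers d \<subseteq> cyclotomic_integers M"
proof
  fix x assume "x \<in> cyclotomic_integers d"
  then obtain H where H: "x = ipoly H (e (1 / real d))"
    by (rule cyclotomic_integersE)
  obtain R where "M = d * R"
    using assms(1) ..
  with assms(2) have "e (1 / real d) = e (1 / real M) ^ R"
    by (simp add: e_power)
  then have "x = ipoly (H \<circ>\<^sub>p monom 1 R) (e (1 / real M))"
    by (simp add: H poly_monom)
  then show "x \<in> cyclotomic_integers M"
    by (simp only: ipoly_in_cyclotomic_integers)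
qed

lemma det_in_cyclotomic_integers:
  assumes "A \<in> carrier_mat n n" "\<And>i j. i < n \<Longrightarrow> j < n \<Longrightarrow> A $$ (i, j) \<in> cyclotomic_integers M"
  shows "det A \<in> cyclotomic_integers M"
  unfolding det_def'[OF assms(1)]
proof (intro cyclotomic_integers_sum cyclotomic_integers_mult of_int_in_cyclotomic_integers
    cyclotomic_integers_prod)
  fix \<pi> i assume "\<pi> \<in> {\<pi>. \<pi> permutes {0..<n}}" "i \<in> {0..<n}"
  then show "A $$ (i, \<pi> i) \<in> cyclotomic_integers M"
    using assms(2) by (simp add: permutes_in_image)
qed

lemma cofactor_in_cyclotomic_integers:
  assumes "A \<in> carrier_mat (Suc n) (Suc n)" "i < Suc n" "j < Suc n"
    and "\<And>i' j'. i' < Suc n \<Longrightarrow> j' < Suc n \<Longrightarrow> j' \<noteq> j \<Longrightarrow> A $$ (i', j') \<in> cyclotomic_integers M"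
  shows "cofactor A i j \<in> cyclotomic_integers M"
proof -
  have "det (mat_delete A i j) \<in> cyclotomic_integers M"
    using assms by (intro det_in_cyclotomic_integers[of _ n]) (auto simp: mat_delete_def)
  then show ?thesis
    unfolding cofactor_def
    using cyclotomic_integers_mult of_int_in_cyclotomic_integers[of "(- 1) ^ (i + j)"] by simp
qed

section \<open>Linear independence of the powers of a prime root of unity\<close>

lemma ipoly_lift_at_conjugate:
  fixes H :: "nat \<Rightarrow> int poly"
  assumes M: "M \<noteq> 0" and q: "q \<noteq> 0" and t: "[t = 1] (mod M)" "[t = c] (mod q)"
  shows "ipoly (\<Sum>b\<in>B. (H b \<circ>\<^sub>p monom 1 q) * monom 1 (M * b)) (e (1 / real (M * q)) ^ t)
    = (\<Sum>b\<in>B. ipoly (H b) (e (1 / real M)) * e (of_nat (c * b) / of_nat q))"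
proof -
  define z where "z = e (1 / real (M * q))"
  have "(z ^ t) ^ q = e (of_nat t / of_nat M)"
    using q unfolding z_def by (simp add: e_power flip: power_mult)
  also have "\<dots> = e (1 / real M)"
    using e_nat_divide_mod[OF M, of t] e_nat_divide_mod[OF M, of 1] t(1)
    by (simp add: cong_def)
  finally have root: "(z ^ t) ^ q = e (1 / real M)" .
  have twist: "(z ^ t) ^ (M * b) = e (of_nat (c * b) / of_nat q)" for b
  proof -
    have "(z ^ t) ^ (M * b) = e (of_nat (t * b) / of_nat q)"
      using M unfolding z_def by (simp add: e_power mult.commute flip: power_mult)
    also have "\<dots> = e (of_nat (c * b) / of_nat q)"
      using e_nat_divide_mod[OF q, of "t * b"] e_nat_divide_mod[OF q, of "c * b"] t(2)
      by (simp add: cong_def mod_mult_left_eq[of t, symmetric] mod_mult_left_eq[of c, symmetric])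
    finally show ?thesis .
  qed
  show ?thesis
    unfolding z_def[symmetric] by (simp add: poly_monom root twist)
qed

lemma cyclotomic_integer_combination_eq_0:
  assumes M: "M \<noteq> 0" and q: "prime q" "\<not> q dvd M"
    and y: "\<And>b. b \<in> {1..q-1} \<Longrightarrow> y b \<in> cyclotomic_integers M"
    and combination: "(\<Sum>b\<in>{1..q-1}. y b * e (of_nat b / of_nat q)) = 0"
    and b: "b \<in> {1..q-1}"
  shows "y b = 0"
proof -
  have q1: "q > 1"
    using q(1) prime_gt_1_nat by blast
  have "\<forall>b\<in>{1..q-1}. \<exists>H. y b = ipoly H (e (1 / real M))"
    using y unfolding cyclotomic_integers_def by blast
  then obtain H where H: "\<And>b. b \<in> {1..q-1} \<Longrightarrow> y b = ipoly (H b) (e (1 / real M))"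
    by metis
  \<comment> \<open>With \<open>\<zeta> = e (1 / (M * q))\<close> we have \<open>\<zeta>\<^sup>q = e (1 / M)\<close> and \<open>\<zeta>\<^sup>M = e (1 / q)\<close>, so \<open>G(\<zeta>)\<close> is the given combination.\<close>
  define G where "G = (\<Sum>b\<in>{1..q-1}. (H b \<circ>\<^sub>p monom 1 q) * monom 1 (M * b))"
  have conjugate: "ipoly G (e (1 / real (M * q)) ^ t)
      = (\<Sum>b\<in>{1..q-1}. y b * e (of_nat (c * b) / of_nat q))"
    if "[t = 1] (mod M)" "[t = c] (mod q)" for t c
    using ipoly_lift_at_conjugate[OF M _ that, of H "{1..q-1}"] q1 H unfolding G_def by simp
  have "(\<Sum>b\<in>{1..q-1}. y b * e (of_nat (c * b) / of_nat q)) = 0" if c: "c \<in> {1..q-1}" for c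
  proof -
    have "coprime M q"
      using q prime_imp_coprime[of q M] by (simp add: ac_simps)
    then obtain t where t: "[t = 1] (mod M)" "[t = c] (mod q)"
      using binary_chinese_remainder_nat by blast
    have "\<not> q dvd c"
      using c by (auto dest: dvd_imp_le)
    then have "coprime c q"
      using q(1) prime_imp_coprime[of q c] by (simp add: ac_simps)
    then have "coprime t (M * q)"
      using cong_imp_coprime[OF cong_sym[OF t(1)]] cong_imp_coprime[OF cong_sym[OF t(2)]] by simp
    moreover have "e (1 / real (M * q)) ^ (M * q) = 1"
      using M q1 e_of_nat[of 1] by (simp add: e_power)
    moreover have "ipoly G (e (1 / real (M * q))) = 0"
      using conjugate[of 1 1] combination by simp
    ultimately have "ipoly G (e (1 / real (M * q)) ^ t) = 0"
      using M q1 by (intro int_poly_root_of_unity_power_coprime[of _ "M * q"]) simp_all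
    with conjugate[OF t] show ?thesis
      by simp
  qed
  then show ?thesis
    using q1 b by (intro all_twisted_sums_zero_imp_zero[of q y]) simp_all
qed

lemma cyclotomic_integer_combination_inj_eq_0:
  assumes M: "M \<noteq> 0" and q: "prime q" "\<not> q dvd M" and I: "finite I"
    and g: "inj_on g I" "g ` I \<subseteq> {1..q-1}"
    and w: "\<And>x. x \<in> I \<Longrightarrow> w x \<in> cyclotomic_integers M"
    and combination: "(\<Sum>x\<in>I. w x * e (of_nat (g x) / of_nat q)) = 0"
    and x: "x \<in> I"
  shows "w x = 0"
proof -
  define y where "y b = (\<Sum>x'\<in>{x'\<in>I. g x' = b}. w x')" for b
  have "(\<Sum>b\<in>{1..q-1}. y b * e (of_nat b / of_nat q))
      = (\<Sum>b\<in>{1..q-1}. \<Sum>x'\<in>{x'\<in>I. g x' = b}. w x' * e (of_nat (g x') / of_nat q))"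
    unfolding y_def sum_distrib_right by (intro sum.cong refl) auto
  also have "\<dots> = 0"
    using I g(2) combination by (subst sum.group) auto
  finally have "y (g x) = 0"
    using M q g(2) x w unfolding y_def
    by (intro cyclotomic_integer_combination_eq_0[where y = y, unfolded y_def])
      (auto intro!: cyclotomic_integers_sum)
  moreover have "{x'\<in>I. g x' = g x} = {x}"
    using g(1) x by (auto dest: inj_onD)
  ultimately show ?thesis
    unfolding y_def by simp
qed

lemma mult_mod_prime_permutes:
  fixes c :: nat
  assumes "prime q" "\<not> q dvd c"
  shows "inj_on (\<lambda>a. c * a mod q) {1..q-1}" "(\<lambda>a. c * a mod q) ` {1..q-1} \<subseteq> {1..q-1}"
proof -
  have "coprime c q"
    using assms prime_imp_coprime[of q c] by (simp add: ac_simps)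
  then show "inj_on (\<lambda>a. c * a mod q) {1..q-1}"
    by (intro inj_onI) (auto simp: cong_def[symmetric] cong_mult_lcancel_nat
        dest: cong_less_modulus_unique_nat)
  have "c * a mod q \<in> {1..q-1}" if "a \<in> {1..q-1}" for a
  proof -
    have "\<not> q dvd a"
      using that by (auto dest: dvd_imp_le)
    with assms have "c * a mod q \<noteq> 0"
      by (simp add: mod_eq_0_iff_dvd prime_dvd_mult_iff)
    moreover have "c * a mod q < q"
      using assms(1) by (simp add: prime_gt_0_nat)
    ultimately show ?thesis
      by auto
  qed
  then show "(\<lambda>a. c * a mod q) ` {1..q-1} \<subseteq> {1..q-1}"
    by blast
qed

lemma e_prime_fraction_split:
  assumes q: "prime q" "\<not> q dvd m * n"
  obtains b :: "nat \<Rightarrow> nat" and w :: "nat \<Rightarrow> complex"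
  where "inj_on b {1..q-1}" "b ` {1..q-1} \<subseteq> {1..q-1}"
    and "\<And>a. w a \<in> cyclotomic_integers m" "\<And>a. w a \<noteq> 0"
    and "\<And>a. e (of_nat (n * a) / of_nat (m * q)) = w a * e (of_nat (b a) / of_nat q)"
proof -
  have "m * n \<noteq> 0"
    using q(2) by (metis dvd_0_right)
  then have "m \<noteq> 0" "q \<noteq> 0" "\<not> q dvd m" "\<not> q dvd n"
    using q by auto
  then have "coprime (int m) (int q)"
    using q(1) prime_imp_coprime[of q m] by (simp add: ac_simps)
  then obtain \<alpha> \<beta> where \<alpha>\<beta>: "\<alpha> * int m + \<beta> * int q = 1"
    using bezout_int[of "int m" "int q"] by auto
  have "\<not> int q dvd \<alpha>"
  proof
    assume "int q dvd \<alpha>"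
    then have "int q dvd 1"
      unfolding \<alpha>\<beta>[symmetric] by simp
    with q(1) show False
      by simp
  qed
  define c where "c = nat ((int n * \<alpha>) mod int q)"
  have c: "int c = (int n * \<alpha>) mod int q"
    unfolding c_def using \<open>q \<noteq> 0\<close> by simp
  have "\<not> q dvd c"
  proof
    assume "q dvd c"
    then have "int q dvd int n * \<alpha>"
      using c by (metis dvd_mod_iff dvd_refl int_dvd_int_iff)
    with q(1) \<open>\<not> q dvd n\<close> \<open>\<not> int q dvd \<alpha>\<close> show False
      by (simp add: prime_dvd_mult_iff)
  qed
  define w where "w = (\<lambda>a. e (of_int (int (n * a) * \<beta>) / of_nat m))"
  show ?thesis
  proof (rule that[of "\<lambda>a. c * a mod q" w])
    show "inj_on (\<lambda>a. c * a mod q) {1..q-1}" "(\<lambda>a. c * a mod q) ` {1..q-1} \<subseteq> {1..q-1}"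
      using mult_mod_prime_permutes[OF q(1) \<open>\<not> q dvd c\<close>] by simp_all
    show "w a \<in> cyclotomic_integers m" for a
      unfolding w_def by (rule e_in_cyclotomic_integers)
    show "w a \<noteq> 0" for a
      unfolding w_def by simp
    show "e (of_nat (n * a) / of_nat (m * q)) = w a * e (of_nat (c * a mod q) / of_nat q)" for a
    proof -
      have "e (of_nat (n * a) / of_nat (m * q)) = e (of_int (int (n * a)) / of_nat (m * q))"
        by simp
      also have "\<dots> = e (of_int (int (n * a) * \<alpha>) / of_nat q) * w a"
        unfolding w_def by (rule e_divide_mult_split[OF \<alpha>\<beta> \<open>m \<noteq> 0\<close> \<open>q \<noteq> 0\<close>])
      also have "int (n * a) * \<alpha> = int n * \<alpha> * int a"
        by simp
      also have "e (of_int (int n * \<alpha> * int a) / of_nat q) = e (of_nat (c * a mod q) / of_nat q)"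
        using \<open>q \<noteq> 0\<close> c by (rule e_mult_mod)
      finally show ?thesis
        by (simp only: mult.commute)
    qed
  qed
qed

section \<open>The determinant\<close>

lemma inj_on_comp_snd_Sigma:
  assumes "inj_on b (\<Union>i\<in>A. s i)"
    and "\<And>i i'. i \<in> A \<Longrightarrow> i' \<in> A \<Longrightarrow> i \<noteq> i' \<Longrightarrow> s i \<inter> s i' = {}"
  shows "inj_on (b \<circ> snd) (Sigma A s)"
proof (rule inj_onI)
  fix x x' assume x: "x \<in> Sigma A s" "x' \<in> Sigma A s" "(b \<circ> snd) x = (b \<circ> snd) x'"
  moreover have "snd x \<in> (\<Union>i\<in>A. s i)" "snd x' \<in> (\<Union>i\<in>A. s i)"
    using x(1,2) by auto
  ultimately have "snd x = snd x'"
    using inj_onD[OF assms(1)] by simp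
  moreover have "fst x = fst x'"
  proof (rule ccontr)
    assume "fst x \<noteq> fst x'"
    moreover have "fst x \<in> A" "fst x' \<in> A"
      using x(1,2) by auto
    ultimately have "s (fst x) \<inter> s (fst x') = {}"
      using assms(2) by blast
    moreover have "snd x \<in> s (fst x)" "snd x' \<in> s (fst x')"
      using x(1,2) by auto
    ultimately show False
      using \<open>snd x = snd x'\<close> by auto
  qed
  ultimately show "x = x'"
    by (simp add: prod_eq_iff)
qed

lemma laplace_expansion_last_column_Sigma:
  assumes A: "A \<in> carrier_mat (Suc k) (Suc k)"
    and last: "\<And>i. i < Suc k \<Longrightarrow> A $$ (i, k) = (\<Sum>a\<in>s i. f a)"
    and fin: "\<And>i. i < Suc k \<Longrightarrow> finite (s i)"
  shows "det A = (\<Sum>x\<in>Sigma {..<Suc k} s. f (snd x) * cofactor A (fst x) k)"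
proof -
  have "det A = (\<Sum>i<Suc k. A $$ (i, k) * cofactor A i k)"
    by (rule laplace_expansion_column[OF A]) simp
  also have "\<dots> = (\<Sum>i<Suc k. \<Sum>a\<in>s i. f a * cofactor A i k)"
    by (intro sum.cong refl) (simp add: last sum_distrib_right)
  also have "\<dots> = (\<Sum>x\<in>Sigma {..<Suc k} s. f (snd x) * cofactor A (fst x) k)"
    using fin by (subst sum.Sigma) (auto simp: split_beta)
  finally show ?thesis .
qed

lemma det_nonzero_by_last_column:
  fixes A :: "complex mat"
  assumes A: "A \<in> carrier_mat (Suc k) (Suc k)"
    and M: "M \<noteq> 0" and q: "prime q" "\<not> q dvd M"
    and cols: "\<And>i j. i < Suc k \<Longrightarrow> j < k \<Longrightarrow> A $$ (i, j) \<in> cyclotomic_integers M"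
    and last: "\<And>i. i < Suc k \<Longrightarrow> A $$ (i, k) = (\<Sum>a\<in>s i. w a * e (of_nat (b a) / of_nat q))"
    and s: "\<And>i. i < Suc k \<Longrightarrow> s i \<subseteq> {1..q-1}"
    and disjoint: "\<And>i i'. i < Suc k \<Longrightarrow> i' < Suc k \<Longrightarrow> i \<noteq> i' \<Longrightarrow> s i \<inter> s i' = {}"
    and b: "inj_on b {1..q-1}" "b ` {1..q-1} \<subseteq> {1..q-1}"
    and w: "\<And>a. w a \<in> cyclotomic_integers M" "\<And>a. w a \<noteq> 0"
    and diagonal: "s k \<noteq> {}" "cofactor A k k \<noteq> 0"
  shows "det A \<noteq> 0"
proof
  assume "det A = 0"
  define I where "I = Sigma {..<Suc k} s"
  define z where "z x = w (snd x) * cofactor A (fst x) k" for x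
  have fin: "finite (s i)" if "i < Suc k" for i
    using s[OF that] finite_subset by blast
  then have "finite I"
    unfolding I_def by auto
  have "(\<Sum>x\<in>I. z x * e (of_nat ((b \<circ> snd) x) / of_nat q)) = det A"
    unfolding I_def z_def using laplace_expansion_last_column_Sigma[OF A last fin]
    by (simp add: mult_ac)
  with \<open>det A = 0\<close> have combination: "(\<Sum>x\<in>I. z x * e (of_nat ((b \<circ> snd) x) / of_nat q)) = 0"
    by simp
  have union: "(\<Union>i\<in>{..<Suc k}. s i) \<subseteq> {1..q-1}"
    using s by blast
  have inj: "inj_on (b \<circ> snd) I"
    unfolding I_def using inj_on_subset[OF b(1) union] disjoint by (intro inj_on_comp_snd_Sigma) auto
  have image: "(b \<circ> snd) ` I \<subseteq> {1..q-1}"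
  proof
    fix y assume "y \<in> (b \<circ> snd) ` I"
    then obtain i a where "y = b a" "i < Suc k" "a \<in> s i"
      unfolding I_def by auto
    then show "y \<in> {1..q-1}"
      using union b(2) by blast
  qed
  have cyclotomic: "z x \<in> cyclotomic_integers M" if "x \<in> I" for x
  proof -
    have "fst x < Suc k"
      using that unfolding I_def by auto
    then have "cofactor A (fst x) k \<in> cyclotomic_integers M"
      using A cols by (intro cofactor_in_cyclotomic_integers) auto
    then show ?thesis
      using w(1) unfolding z_def by (rule cyclotomic_integers_mult[rotated])
  qed
  obtain a where "a \<in> s k"
    using diagonal(1) by blast
  then have "(k, a) \<in> I"
    unfolding I_def by simp
  then have "z (k, a) = 0"
    using cyclotomic_integer_combination_inj_eq_0[OF M q \<open>finite I\<close> inj image cyclotomic combination]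
    by blast
  with w(2) diagonal(2) show False
    unfolding z_def by simp
qed

lemma cofactor_mat_last_diagonal: "cofactor (mat (Suc k) (Suc k) f) k k = det (mat k k f)"
proof -
  have "mat_delete (mat (Suc k) (Suc k) f) k k = mat k k f"
    by (rule eq_matI) (auto simp: mat_delete_def)
  then show ?thesis
    unfolding cofactor_def by simp
qed

lemma prime_not_dvd_prod_other_primes:
  assumes "\<forall>j<Suc k. prime (q j)" "inj_on q {..<Suc k}"
  shows "\<not> q k dvd (\<Prod>l<k. q l)"
proof
  assume "q k dvd (\<Prod>l<k. q l)"
  then obtain l where "l < k" "q k dvd q l"
    using assms(1) by (auto simp: prime_dvd_prod_iff)
  then have "q k = q l"
    using assms(1) by (intro primes_dvd_imp_eq) auto
  with \<open>l < k\<close> assms(2) show False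
    by (auto dest: inj_onD)
qed

lemma exp_sum_det_Suc_nonzero:
  fixes n m :: nat and q :: "nat \<Rightarrow> nat" and s :: "nat \<Rightarrow> nat \<Rightarrow> nat set"
  defines "F \<equiv> \<lambda>(i, j). \<Sum>a\<in>s i j. e (real (n * a) / real (m * q j))"
  assumes q_prime: "\<forall>j<Suc k. prime (q j)"
    and q_distinct: "inj_on q {..<Suc k}"
    and q_ndvd: "\<forall>j<Suc k. \<not> q j dvd m * n"
    and s_sub: "\<forall>i<Suc k. \<forall>j<Suc k. s i j \<subseteq> {1..q j - 1}"
    and s_disj: "\<forall>j<Suc k. \<forall>i1<Suc k. \<forall>i2<Suc k. i1 \<noteq> i2 \<longrightarrow> s i1 j \<inter> s i2 j = {}"
    and s_diag: "s k k \<noteq> {}"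
    and minor: "det (mat k k F) \<noteq> 0"
  shows "det (mat (Suc k) (Suc k) F) \<noteq> 0"
proof -
  define M where "M = m * (\<Prod>l<k. q l)"
  have qk: "prime (q k)" "\<not> q k dvd m * n"
    using q_prime q_ndvd by simp_all
  then have "m \<noteq> 0"
    by (intro notI) simp
  then have "M \<noteq> 0"
    using q_prime unfolding M_def by (simp add: prime_gt_0_nat)
  have "\<not> q k dvd M"
    using q_prime q_ndvd prime_not_dvd_prod_other_primes[OF q_prime q_distinct]
    unfolding M_def by (simp add: prime_dvd_mult_iff)
  obtain b w where b: "inj_on b {1..q k - 1}" "b ` {1..q k - 1} \<subseteq> {1..q k - 1}"
    and w: "\<And>a. w a \<in> cyclotomic_integers m" "\<And>a. w a \<noteq> 0"
    and e_split: "\<And>a. e (of_nat (n * a) / of_nat (m * q k)) = w a * e (of_nat (b a) / of_nat (q k))"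
    using e_prime_fraction_split[OF qk] by blast
  have "w a \<in> cyclotomic_integers M" for a
    using w(1) cyclotomic_integers_mono[of m M] \<open>M \<noteq> 0\<close> unfolding M_def by auto
  moreover have "mat (Suc k) (Suc k) F $$ (i, j) \<in> cyclotomic_integers M"
    if "i < Suc k" "j < k" for i j
  proof -
    have "cyclotomic_integers (m * q j) \<subseteq> cyclotomic_integers M"
      using \<open>M \<noteq> 0\<close> \<open>j < k\<close> unfolding M_def
      by (intro cyclotomic_integers_mono) (auto intro: dvd_prodI)
    moreover have "F (i, j) \<in> cyclotomic_integers (m * q j)"
      unfolding F_def using e_in_cyclotomic_integers[of "int (n * _)" "m * q j"]
      by (auto intro: cyclotomic_integers_sum)
    ultimately show ?thesis
      using that by auto
  qed
  moreover have "mat (Suc k) (Suc k) F $$ (i, k) = (\<Sum>a\<in>s i k. w a * e (of_nat (b a) / of_nat (q k)))"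
    if "i < Suc k" for i
    using that by (simp add: F_def e_split del: of_nat_mult)
  moreover have "cofactor (mat (Suc k) (Suc k) F) k k \<noteq> 0"
    using minor by (simp add: cofactor_mat_last_diagonal)
  ultimately show ?thesis
    using \<open>M \<noteq> 0\<close> \<open>\<not> q k dvd M\<close> q_prime s_sub s_disj s_diag b w(2)
    by (intro det_nonzero_by_last_column[where M = M and q = "q k" and s = "\<lambda>i. s i k" and w = w and b = b])
      simp_all
qed

theorem lemma4p5:
  fixes h n m :: nat and q :: "nat \<Rightarrow> nat" and s :: "nat \<Rightarrow> nat \<Rightarrow> nat set"
  assumes q_prime: "\<forall>j<h. prime (q j)"
    and q_distinct: "inj_on q {..<h}"
    and q_ndvd: "\<forall>j<h. \<not> q j dvd m * n"
    and s_sub: "\<forall>i<h. \<forall>j<h. s i j \<subseteq> {1..q j - 1}"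
    and s_disj: "\<forall>j<h. \<forall>i1<h. \<forall>i2<h. i1 \<noteq> i2 \<longrightarrow> s i1 j \<inter> s i2 j = {}"
    and s_diag: "\<forall>i<h. s i i \<noteq> {}"
  shows "det (mat h h (\<lambda>(i, j). \<Sum>a\<in>s i j. e (real (n * a) / real (m * q j)))) \<noteq> 0"
  using assms
proof (induction h)
  case 0
  show ?case
    by (simp add: det_def)
next
  case (Suc k)
  have "inj_on q {..<k}"
    using Suc.prems(2) by (rule inj_on_subset) auto
  then have "det (mat k k (\<lambda>(i, j). \<Sum>a\<in>s i j. e (real (n * a) / real (m * q j)))) \<noteq> 0"
    using Suc.prems by (intro Suc.IH) auto
  with Suc.prems show ?case
    by (intro exp_sum_det_Suc_nonzero) auto
qed

end
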